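(* Let $q$ be a prime power with $q\equiv 1\pmod{52}$. Fix a primitive root $\alpha$ of $\mathbb{F}_q$ and set $\beta=\alpha^{(q-1)/13}$. Let $\chi$ be the quadratic residue character of $\mathbb{F}_q$. The following statements are equivalent: (i) $(q,13)$ gives a $3$-design; (ii) $(q,26)$ gives a $3$-design; (iii) the sequence $(\chi(1-\beta),\chi(1-\beta^2),\dots,\chi(1-\beta^6))$ is one of $\pm(1,1,-1,1,-1,-1)$, $\pm(1,1,-1,-1,-1,1)$, $\pm(1,-1,1,1,-1,-1)$, $\pm(1,-1,1,-1,-1,1)$.
   Context: Let $q$ be a power of an odd prime. The group $\mathrm{PSL}(2,q)$ acts on the projective line $\mathrm{PG}(1,q)=\mathbb{F}_q\cup\{\infty\}$ by linear fractional transformations $z\mapsto (az+b)/(cz+d)$, where $a,b,c,d\in\mathbb{F}_q$ with $ad-bc$ a nonzero square (matrices taken modulo $\pm I$). A $k$-subset $B$ of $\mathrm{PG}(1,q)$ is a starter of a $3$-design if the orbit $\{gB: g\in\mathrm{PSL}(2,q)\}$ is the block set of a $3$-$(q+1,k,\lambda)$ design for some positive integer $\lambda$. For $q\equiv1\pmod 4$ and a divisor $k$ of $q-1$, let $B$ be the unique subgroup of order $k$ of $\mathbb{F}_q^\times$; we say $(q,k)$ gives a $3$-design if $B$ is a starter of a $3$-design under $\mathrm{PSL}(2,q)$. The quadratic residue character $\chi:\mathbb{F}_q^\times\to\{\pm1\}$ is $\chi(a)=1$ if $a$ is a nonzero square and $\chi(a)=-1$ otherwise. *)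

theory Defs
  imports Main
begin

text \<open>The projective line PG(1,q) over a finite field 'a is modelled as 'a option,
  with None playing the role of the point at infinity.\<close>

definition lft :: "'a::field \<Rightarrow> 'a \<Rightarrow> 'a \<Rightarrow> 'a \<Rightarrow> 'a option \<Rightarrow> 'a option" where
  "lft a b c d z = (case z of
      None \<Rightarrow> (if c = 0 then None else Some (a / c))
    | Some x \<Rightarrow> (if c * x + d = 0 then None else Some ((a * x + b) / (c * x + d))))"

definition PSL2 :: "('a::field option \<Rightarrow> 'a option) set" where
  "PSL2 = {lft a b c d | a b c d. a * d - b * c \<noteq> 0 \<and> (\<exists>s. a * d - b * c = s ^ 2)}"

definition PSL2_orbit :: "'a::field option set \<Rightarrow> 'a option set set" where
  "PSL2_orbit B = {g ` B | g. g \<in> PSL2}"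

definition starter3 :: "nat \<Rightarrow> 'a::{finite,field} option set \<Rightarrow> bool" where
  "starter3 k B \<longleftrightarrow> card B = k \<and>
     (\<exists>lam::nat. lam > 0 \<and>
        (\<forall>T::'a option set. card T = 3 \<longrightarrow> card {X \<in> PSL2_orbit B. T \<subseteq> X} = lam))"

definition mult_subgroup :: "nat \<Rightarrow> 'a::{finite,field} set" where
  "mult_subgroup k = {x. x \<noteq> 0 \<and> x ^ k = 1}"

definition gives_3design :: "'a::{finite,field} itself \<Rightarrow> nat \<Rightarrow> bool" where
  "gives_3design _ k \<longleftrightarrow> starter3 k (Some ` (mult_subgroup k :: 'a set))"

definition primitive_root :: "'a::{finite,field} \<Rightarrow> bool" where
  "primitive_root \<alpha> \<longleftrightarrow> \<alpha> \<noteq> 0 \<and> (\<forall>x. x \<noteq> 0 \<longrightarrow> (\<exists>n::nat. \<alpha> ^ n = x))"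

definition qchi :: "'a::field \<Rightarrow> int" where
  "qchi a = (if a \<noteq> 0 \<and> (\<exists>s. a = s ^ 2) then 1 else -1)"

end

theory Submission
  imports Defs
begin

text \<open>
  For \<open>q = 1 (mod 4)\<close> the quadratic character \<open>\<chi>\<close> of \<open>(x - y) (y - z) (z - x)\<close>, taken in
  homogeneous coordinates, does not depend on the order of three distinct points of \<open>PG(1, q)\<close>
  and is invariant under \<open>PSL(2, q)\<close>. It splits the 3-subsets into two orbits of equal size,
  swapped by \<open>z \<mapsto> \<alpha> z\<close>. Double counting pairs (triple, block) shows that \<open>B\<close> is a starter iff
  it contains equally many triples of both kinds, i.e. iff the sum of \<open>\<chi>\<close> over all ordered
  triples from \<open>B\<close> vanishes.

  For the subgroup \<open>B\<close> of order \<open>k\<close> with \<open>(q - 1) / k\<close> even, its generator \<open>\<gamma>\<close> is a square, so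
  \<open>\<chi>(\<gamma>\<^sup>i - \<gamma>\<^sup>j) = e (j - i)\<close> with \<open>e r = \<chi>(1 - \<gamma>\<^sup>r)\<close>, and the sum is \<open>k\<close> times the
  triple correlation \<open>\<Sum> j l. e j * e (l - j) * e (- l)\<close>. For \<open>k = 13\<close> the function \<open>e\<close> is even,
  hence given by the six signs \<open>\<chi>(1 - \<beta>\<^sup>i)\<close>. For \<open>k = 26\<close> it takes the value \<open>e\<^sub>1\<^sub>3 n\<close> at \<open>2 n\<close>,
  \<open>\<chi>(2)\<close> at \<open>13\<close>, and \<open>e\<^sub>1\<^sub>3 t * e\<^sub>1\<^sub>3 (2 t)\<close> at \<open>2 t + 13\<close>, because
  \<open>1 - \<beta>\<^sup>2\<^sup>t = (1 - \<beta>\<^sup>t) (1 + \<beta>\<^sup>t)\<close>. Running through all sign choices shows that both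
  correlations vanish exactly for the eight listed patterns.
\<close>

section \<open>Linear fractional maps\<close>

type_synonym 'a mat2 = "'a \<times> 'a \<times> 'a \<times> 'a"

fun hcoords :: "'a::field option \<Rightarrow> 'a \<times> 'a" where
  "hcoords None = (1, 0)"
| "hcoords (Some x) = (x, 1)"

fun hpoint :: "'a::field \<times> 'a \<Rightarrow> 'a option" where
  "hpoint (x, y) = (if y = 0 then None else Some (x / y))"

fun vscale :: "'a::field \<Rightarrow> 'a \<times> 'a \<Rightarrow> 'a \<times> 'a" where
  "vscale l (x, y) = (l * x, l * y)"

fun det2 :: "'a::field \<times> 'a \<Rightarrow> 'a \<times> 'a \<Rightarrow> 'a" where
  "det2 (x1, y1) (x2, y2) = x1 * y2 - x2 * y1"

fun mat_vec :: "'a::field mat2 \<Rightarrow> 'a \<times> 'a \<Rightarrow> 'a \<times> 'a" where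
  "mat_vec (a, b, c, d) (x, y) = (a * x + b * y, c * x + d * y)"

fun mat_mult :: "'a::field mat2 \<Rightarrow> 'a mat2 \<Rightarrow> 'a mat2" where
  "mat_mult (a, b, c, d) (a', b', c', d') =
     (a * a' + b * c', a * b' + b * d', c * a' + d * c', c * b' + d * d')"

fun mat_det :: "'a::field mat2 \<Rightarrow> 'a" where
  "mat_det (a, b, c, d) = a * d - b * c"

fun mat_adj :: "'a::field mat2 \<Rightarrow> 'a mat2" where
  "mat_adj (a, b, c, d) = (d, - b, - c, a)"

fun mobius :: "'a::field mat2 \<Rightarrow> 'a option \<Rightarrow> 'a option" where
  "mobius (a, b, c, d) = lft a b c d"

declare mobius.simps [simp del]

lemma mobius_eq_hpoint: "mobius M P = hpoint (mat_vec M (hcoords P))"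
  by (cases M; cases P) (auto simp: lft_def mobius.simps)

lemma hcoords_nonzero: "hcoords P \<noteq> (0, 0)"
  by (cases P) auto

lemma hpoint_hcoords [simp]: "hpoint (hcoords P) = P"
  by (cases P) auto

lemma hcoords_hpoint:
  assumes "v \<noteq> (0, 0)"
  shows "\<exists>l. l \<noteq> 0 \<and> hcoords (hpoint v) = vscale l v"
proof (cases v)
  case (Pair x y)
  show ?thesis
  proof (cases "y = 0")
    case True
    with assms Pair show ?thesis by (intro exI[of _ "1 / x"]) auto
  next
    case False
    with Pair show ?thesis by (intro exI[of _ "1 / y"]) auto
  qed
qed

lemma hpoint_vscale [simp]: "l \<noteq> 0 \<Longrightarrow> hpoint (vscale l v) = hpoint v"
  by (cases v) auto

lemma mat_vec_vscale: "mat_vec M (vscale l v) = vscale l (mat_vec M v)"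
  by (cases M; cases v) (auto simp: algebra_simps)

lemma mat_vec_mult: "mat_vec (mat_mult M N) v = mat_vec M (mat_vec N v)"
  by (cases M; cases N; cases v) (auto simp: algebra_simps)

lemma mat_vec_scalar: "mat_vec (D, 0, 0, D) v = vscale D v"
  by (cases v) auto

lemma mat_det_mult: "mat_det (mat_mult M N) = mat_det M * mat_det N"
  by (cases M; cases N) (auto simp: algebra_simps)

lemma mat_det_adj [simp]: "mat_det (mat_adj M) = mat_det M"
  by (cases M) (auto simp: algebra_simps)

lemma mat_mult_adj_left: "mat_mult (mat_adj M) M = (mat_det M, 0, 0, mat_det M)"
  by (cases M) (auto simp: algebra_simps)

lemma mat_mult_adj_right: "mat_mult M (mat_adj M) = (mat_det M, 0, 0, mat_det M)"
  by (cases M) (auto simp: algebra_simps)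

lemma mat_vec_nonzero:
  assumes "mat_det M \<noteq> 0" "v \<noteq> (0, 0)"
  shows "mat_vec M v \<noteq> (0, 0)"
proof
  assume "mat_vec M v = (0, 0)"
  have "vscale (mat_det M) v = mat_vec (mat_mult (mat_adj M) M) v"
    by (simp only: mat_mult_adj_left mat_vec_scalar)
  also have "\<dots> = mat_vec (mat_adj M) (0, 0)"
    by (simp only: mat_vec_mult \<open>mat_vec M v = (0, 0)\<close>)
  also have "\<dots> = (0, 0)"
    by (cases "mat_adj M") simp
  finally show False
    using assms by (cases v) simp
qed

lemma hcoords_mobius:
  "mat_det M \<noteq> 0 \<Longrightarrow> \<exists>l. l \<noteq> 0 \<and> hcoords (mobius M P) = vscale l (mat_vec M (hcoords P))"
  by (simp add: mobius_eq_hpoint hcoords_hpoint mat_vec_nonzero hcoords_nonzero)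

lemma mobius_mult: "mat_det N \<noteq> 0 \<Longrightarrow> mobius M (mobius N P) = mobius (mat_mult M N) P"
  using hcoords_mobius[of N P]
  by (auto simp: mobius_eq_hpoint mat_vec_vscale mat_vec_mult)

lemma mobius_scalar: "D \<noteq> 0 \<Longrightarrow> mobius (D, 0, 0, D) P = P"
  by (simp add: mobius_eq_hpoint mat_vec_scalar)

lemma mobius_adj_cancel: "mat_det M \<noteq> 0 \<Longrightarrow> mobius (mat_adj M) (mobius M P) = P"
  using mobius_mult[of M "mat_adj M" P] mobius_scalar[of "mat_det M" P]
  by (simp add: mat_mult_adj_left)

lemma mobius_cancel_adj: "mat_det M \<noteq> 0 \<Longrightarrow> mobius M (mobius (mat_adj M) P) = P"
  using mobius_mult[of "mat_adj M" M P] mobius_scalar[of "mat_det M" P]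
  by (simp add: mat_mult_adj_right)

lemma bij_mobius: "mat_det M \<noteq> 0 \<Longrightarrow> bij (mobius M)"
  by (rule o_bij[of "mobius (mat_adj M)"]) (simp_all add: fun_eq_iff mobius_adj_cancel mobius_cancel_adj)

lemma inv_mobius: "mat_det M \<noteq> 0 \<Longrightarrow> inv (mobius M) = mobius (mat_adj M)"
  by (rule inv_unique_comp) (simp_all add: fun_eq_iff mobius_adj_cancel mobius_cancel_adj)

lemma det2_mat_vec: "det2 (mat_vec M u) (mat_vec M v) = mat_det M * det2 u v"
  by (cases M; cases u; cases v) (auto simp: algebra_simps)

lemma det2_vscale_left: "det2 (vscale l u) v = l * det2 u v"
  by (cases u; cases v) (auto simp: algebra_simps)

lemma det2_vscale_right: "det2 u (vscale l v) = l * det2 u v"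
  by (cases u; cases v) (auto simp: algebra_simps)

lemma det2_hcoords_eq_0_iff: "det2 (hcoords P) (hcoords Q) = 0 \<longleftrightarrow> P = Q"
  by (cases P; cases Q) auto

text \<open>For finite points this is \<open>(x - y) (y - z) (z - x)\<close>; its quadratic character separates the
  two \<open>PSL(2, q)\<close>-orbits of 3-subsets.\<close>

definition triple_det :: "'a::field option \<Rightarrow> 'a option \<Rightarrow> 'a option \<Rightarrow> 'a" where
  "triple_det P Q R =
     det2 (hcoords P) (hcoords Q) * det2 (hcoords Q) (hcoords R) * det2 (hcoords R) (hcoords P)"

lemma triple_det_eq_0_iff: "triple_det P Q R = 0 \<longleftrightarrow> P = Q \<or> Q = R \<or> R = P"
  by (simp add: triple_det_def det2_hcoords_eq_0_iff)

lemma triple_det_Some: "triple_det (Some x) (Some y) (Some z) = (x - y) * (y - z) * (z - x)"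
  by (simp add: triple_det_def)

lemma triple_det_rotate: "triple_det Q R P = triple_det P Q R"
  by (simp add: triple_det_def algebra_simps)

lemma triple_det_swap: "triple_det Q P R = - triple_det P Q R"
  by (cases P; cases Q; cases R) (auto simp: triple_det_def algebra_simps)

lemma triple_det_perm:
  assumes "{P', Q', R'} = {P, Q, R}" "P \<noteq> Q" "Q \<noteq> R" "R \<noteq> P"
    "P' \<noteq> Q'" "Q' \<noteq> R'" "R' \<noteq> P'"
  shows "triple_det P' Q' R' = triple_det P Q R \<or> triple_det P' Q' R' = - triple_det P Q R"
proof -
  have "P' = P \<or> P' = Q \<or> P' = R" "Q' = P \<or> Q' = Q \<or> Q' = R" "R' = P \<or> R' = Q \<or> R' = R"
    using assms(1) by blast+
  then show ?thesis
    using assms(2-7) triple_det_rotate[of P Q R] triple_det_rotate[of Q R P]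
      triple_det_swap[of P Q R] triple_det_swap[of R P Q] triple_det_swap[of Q R P]
    by (elim disjE) simp_all
qed

lemma triple_det_mobius:
  assumes "mat_det M \<noteq> 0"
  shows "\<exists>m. m \<noteq> 0 \<and>
    triple_det (mobius M P) (mobius M Q) (mobius M R) = m\<^sup>2 * mat_det M ^ 3 * triple_det P Q R"
proof -
  obtain a b c where abc: "a \<noteq> 0" "b \<noteq> 0" "c \<noteq> 0"
    and "hcoords (mobius M P) = vscale a (mat_vec M (hcoords P))"
      "hcoords (mobius M Q) = vscale b (mat_vec M (hcoords Q))"
      "hcoords (mobius M R) = vscale c (mat_vec M (hcoords R))"
    using hcoords_mobius[OF assms, of P] hcoords_mobius[OF assms, of Q]
      hcoords_mobius[OF assms, of R] by blast
  then have "triple_det (mobius M P) (mobius M Q) (mobius M R) =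
      (a * b * mat_det M * det2 (hcoords P) (hcoords Q)) * (b * c * mat_det M * det2 (hcoords Q) (hcoords R))
      * (c * a * mat_det M * det2 (hcoords R) (hcoords P))"
    by (simp only: triple_det_def det2_vscale_left det2_vscale_right det2_mat_vec mult_ac)
  also have "\<dots> = (a * b * c)\<^sup>2 * mat_det M ^ 3 * triple_det P Q R"
    unfolding triple_det_def by algebra
  finally show ?thesis
    using abc by (intro exI[of _ "a * b * c"]) simp
qed

lemma mobius_three_points:
  assumes "P \<noteq> Q" "Q \<noteq> R" "R \<noteq> P"
  shows "\<exists>N. mat_det N \<noteq> 0 \<and> mobius N None = P \<and> mobius N (Some 0) = Q \<and> mobius N (Some 1) = R"
proof -
  obtain u1 u2 v1 v2 w1 w2 where
    uvw: "hcoords P = (u1, u2)" "hcoords Q = (v1, v2)" "hcoords R = (w1, w2)"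
    by (metis surj_pair)
  define a where "a = det2 (hcoords R) (hcoords Q)"
  define b where "b = det2 (hcoords P) (hcoords R)"
  define D where "D = det2 (hcoords P) (hcoords Q)"
  have "a \<noteq> 0" "b \<noteq> 0" "D \<noteq> 0"
    using assms by (simp_all add: a_def b_def D_def det2_hcoords_eq_0_iff)
  define N where "N = (a * u1, b * v1, a * u2, b * v2)"
  have "mat_det N = a * b * D"
    using uvw by (simp add: N_def D_def algebra_simps)
  \<comment> \<open>Cramer's rule: \<open>a u + b v = D w\<close>.\<close>
  moreover have "mat_vec N (1, 1) = vscale D (hcoords R)"
    using uvw by (simp add: N_def a_def b_def D_def algebra_simps)
  moreover have "mat_vec N (1, 0) = vscale a (hcoords P)" "mat_vec N (0, 1) = vscale b (hcoords Q)"
    using uvw by (simp_all add: N_def)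
  ultimately show ?thesis
    using \<open>a \<noteq> 0\<close> \<open>b \<noteq> 0\<close> \<open>D \<noteq> 0\<close>
    by (intro exI[of _ N]) (simp add: mobius_eq_hpoint)
qed

lemma PSL2_iff: "g \<in> PSL2 \<longleftrightarrow> (\<exists>M s. g = mobius M \<and> s \<noteq> 0 \<and> mat_det M = s\<^sup>2)"
proof
  assume "g \<in> PSL2"
  then obtain a b c d s where "g = lft a b c d" "a * d - b * c \<noteq> 0" "a * d - b * c = s\<^sup>2"
    unfolding PSL2_def by blast
  then show "\<exists>M s. g = mobius M \<and> s \<noteq> 0 \<and> mat_det M = s\<^sup>2"
    by (intro exI[of _ "(a, b, c, d)"] exI[of _ s]) (auto simp: mobius.simps)
next
  assume "\<exists>M s. g = mobius M \<and> s \<noteq> 0 \<and> mat_det M = s\<^sup>2"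
  then obtain a b c d s where "g = mobius (a, b, c, d)" "s \<noteq> 0" "mat_det (a, b, c, d) = s\<^sup>2"
    by (metis prod_cases4)
  then have "g = lft a b c d \<and> a * d - b * c \<noteq> 0 \<and> (\<exists>s. a * d - b * c = s\<^sup>2)"
    by (auto simp: mobius.simps)
  then show "g \<in> PSL2"
    unfolding PSL2_def by blast
qed

lemma PSL2E:
  assumes "g \<in> PSL2"
  obtains M s where "g = mobius M" "s \<noteq> 0" "mat_det M = s\<^sup>2"
  using assms PSL2_iff by blast

lemma mobius_in_PSL2: "s \<noteq> 0 \<Longrightarrow> mat_det M = s\<^sup>2 \<Longrightarrow> mobius M \<in> PSL2"
  using PSL2_iff by blast

lemma PSL2_comp:
  assumes "g \<in> PSL2" "h \<in> PSL2"
  shows "g \<circ> h \<in> PSL2"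
proof -
  obtain M s N t where "g = mobius M" "s \<noteq> 0" "mat_det M = s\<^sup>2"
    and "h = mobius N" "t \<noteq> 0" "mat_det N = t\<^sup>2"
    using assms by (elim PSL2E)
  then have "g \<circ> h = mobius (mat_mult M N)" "mat_det (mat_mult M N) = (s * t)\<^sup>2"
    by (simp_all add: fun_eq_iff mobius_mult mat_det_mult power_mult_distrib)
  then show ?thesis
    using \<open>s \<noteq> 0\<close> \<open>t \<noteq> 0\<close> mobius_in_PSL2[of "s * t"] by simp
qed

lemma inv_PSL2: "g \<in> PSL2 \<Longrightarrow> inv g \<in> PSL2"
  by (metis PSL2E inv_mobius mat_det_adj mobius_in_PSL2 power_not_zero)

lemma bij_PSL2: "g \<in> PSL2 \<Longrightarrow> bij g"
  by (metis PSL2E bij_mobius power_not_zero)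

lemma id_PSL2: "id \<in> PSL2"
proof -
  have "id = mobius (1, 0, 0, (1::'a))"
    by (simp add: fun_eq_iff mobius_scalar)
  then show ?thesis
    using mobius_in_PSL2[of 1 "(1, 0, 0, 1::'a)"] by simp
qed

lemma image_in_PSL2_orbit_iff:
  assumes "g \<in> PSL2"
  shows "g ` X \<in> PSL2_orbit B \<longleftrightarrow> X \<in> PSL2_orbit B"
proof -
  have closed: "f ` Y \<in> PSL2_orbit B" if f: "f \<in> PSL2" and Y: "Y \<in> PSL2_orbit B" for f Y
  proof -
    obtain h where "h \<in> PSL2" "Y = h ` B"
      using Y unfolding PSL2_orbit_def by blast
    then have "f ` Y = (f \<circ> h) ` B" "f \<circ> h \<in> PSL2"
      using f by (auto simp: image_comp PSL2_comp)
    then show ?thesis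
      unfolding PSL2_orbit_def by blast
  qed
  have "X = inv g ` g ` X"
    using bij_PSL2[OF assms] by (simp add: bij_is_inj)
  then show ?thesis
    using closed[OF assms] closed[OF inv_PSL2[OF assms], of "g ` X"] by metis
qed

lemma self_in_PSL2_orbit: "B \<in> PSL2_orbit B"
  unfolding PSL2_orbit_def by (rule CollectI, rule exI[of _ id]) (simp add: id_PSL2)

section \<open>Quadratic character and cyclic subgroups\<close>

lemma power_mod_eq_of_power_eq_1:
  fixes x :: "'a::monoid_mult"
  assumes "x ^ p = 1"
  shows "x ^ n = x ^ (n mod p)"
proof -
  have "x ^ n = (x ^ p) ^ (n div p) * x ^ (n mod p)"
    by (metis mult_div_mod_eq power_add power_mult)
  with assms show ?thesis
    by simp
qed

lemma power_card_minus_one: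
  fixes x :: "'a::{finite,field}"
  assumes "x \<noteq> 0"
  shows "x ^ (card (UNIV :: 'a set) - 1) = 1"
proof -
  let ?U = "UNIV - {0::'a}"
  have "x ^ card ?U * (\<Prod>y\<in>?U. y) = (\<Prod>y\<in>?U. x * y)"
    by (simp add: prod.distrib)
  also have "\<dots> = (\<Prod>y\<in>?U. y)"
    by (rule prod.reindex_bij_witness[of _ "\<lambda>y. y / x" "\<lambda>y. x * y"]) (use assms in auto)
  finally have "x ^ card ?U = 1"
    by simp
  then show ?thesis
    by (simp add: card_Diff_singleton)
qed

text \<open>\<open>qchi\<close> maps \<open>0\<close> to \<open>-1\<close>; \<open>qchi0\<close> follows the usual convention \<open>\<chi>(0) = 0\<close>, which makes it
  multiplicative.\<close>

definition qchi0 :: "'a::field \<Rightarrow> int" where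
  "qchi0 x = (if x = 0 then 0 else qchi x)"

lemma qchi0_0 [simp]: "qchi0 0 = 0"
  by (simp add: qchi0_def)

lemma qchi0_cases: "x \<noteq> 0 \<Longrightarrow> qchi0 x = 1 \<or> qchi0 x = -1"
  by (simp add: qchi0_def qchi_def)

lemma qchi0_mult_self: "x \<noteq> 0 \<Longrightarrow> qchi0 x * qchi0 x = 1"
  using qchi0_cases by fastforce

lemma qchi0_eq_1_iff: "qchi0 x = 1 \<longleftrightarrow> x \<noteq> 0 \<and> (\<exists>s. x = s\<^sup>2)"
  by (auto simp: qchi0_def qchi_def)

lemma qchi0_square: "s \<noteq> 0 \<Longrightarrow> qchi0 (s\<^sup>2) = 1"
  by (auto simp: qchi0_eq_1_iff)

lemma qchi0_1 [simp]: "qchi0 1 = 1"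
  using qchi0_square[of 1] by simp

lemma dvd_diff_1_of_mod_eq_1: "(m::nat) mod n = 1 \<Longrightarrow> n dvd m - 1"
  by (metis dvd_minus_mod)

locale field_prim_root =
  fixes \<alpha> :: "'a::{finite,field}" and ord :: nat
  assumes primitive: "primitive_root \<alpha>"
    and ord_def: "ord = card (UNIV :: 'a set) - 1"
begin

lemma prim_nonzero: "\<alpha> \<noteq> 0"
  using primitive by (simp add: primitive_root_def)

lemma ex_power_eq: "x \<noteq> 0 \<Longrightarrow> \<exists>n. x = \<alpha> ^ n"
  using primitive by (metis primitive_root_def)

lemma card_nonzero: "card {x::'a. x \<noteq> 0} = ord"
proof -
  have "{x::'a. x \<noteq> 0} = UNIV - {0}"
    by blast
  then show ?thesis
    by (simp add: ord_def card_Diff_singleton)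
qed

lemma ord_pos: "0 < ord"
proof -
  have "{x::'a. x \<noteq> 0} \<noteq> {}"
    using one_neq_zero by blast
  then show ?thesis
    by (metis card_gt_0_iff card_nonzero finite)
qed

lemma power_ord: "\<alpha> ^ ord = 1"
  using power_card_minus_one[OF prim_nonzero] by (simp add: ord_def)

lemma power_mod_ord: "\<alpha> ^ n = \<alpha> ^ (n mod ord)"
  by (rule power_mod_eq_of_power_eq_1[OF power_ord])

lemma power_image_eq_nonzero: "(\<lambda>i. \<alpha> ^ i) ` {..<ord} = {x. x \<noteq> 0}"
proof
  show "(\<lambda>i. \<alpha> ^ i) ` {..<ord} \<subseteq> {x. x \<noteq> 0}"
    using prim_nonzero by auto
  show "{x. x \<noteq> 0} \<subseteq> (\<lambda>i. \<alpha> ^ i) ` {..<ord}"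
  proof
    fix x :: 'a
    assume "x \<in> {x. x \<noteq> 0}"
    then obtain n where "x = \<alpha> ^ (n mod ord)"
      using ex_power_eq power_mod_ord by auto
    then show "x \<in> (\<lambda>i. \<alpha> ^ i) ` {..<ord}"
      using ord_pos by auto
  qed
qed

lemma power_eq_power_iff: "\<alpha> ^ n = \<alpha> ^ m \<longleftrightarrow> n mod ord = m mod ord"
proof -
  have inj: "inj_on (\<lambda>i. \<alpha> ^ i) {..<ord}"
    by (rule eq_card_imp_inj_on) (simp_all add: power_image_eq_nonzero card_nonzero)
  have "n mod ord = m mod ord" if "\<alpha> ^ (n mod ord) = \<alpha> ^ (m mod ord)"
    using inj_onD[OF inj that] by (simp add: ord_pos)
  then show ?thesis
    using power_mod_ord[of n] power_mod_ord[of m] by metis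
qed

lemma power_eq_1_iff: "\<alpha> ^ n = 1 \<longleftrightarrow> ord dvd n"
  using power_eq_power_iff[of n 0] by (simp add: dvd_eq_mod_eq_0)

definition gen :: "nat \<Rightarrow> 'a" where
  "gen k = \<alpha> ^ (ord div k)"

lemma gen_nonzero: "gen k \<noteq> 0"
  by (simp add: gen_def prim_nonzero)

context
  fixes k :: nat
  assumes k: "0 < k" "k dvd ord"
begin

lemma gen_power_eq_iff: "gen k ^ i = gen k ^ j \<longleftrightarrow> i mod k = j mod k"
proof -
  obtain d where d: "ord = d * k"
    using k by (metis dvdE mult.commute)
  with ord_pos k have "0 < d" "ord div k = d"
    by auto
  then have "gen k ^ n = \<alpha> ^ (d * n)" for n
    by (simp add: gen_def power_mult)
  then have "gen k ^ i = gen k ^ j \<longleftrightarrow> (d * i) mod (d * k) = (d * j) mod (d * k)"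
    by (simp add: power_eq_power_iff d)
  then show ?thesis
    using \<open>0 < d\<close> by (simp only: mod_mult_mult1) simp
qed

lemma gen_power_eq_1_iff: "gen k ^ n = 1 \<longleftrightarrow> k dvd n"
  using gen_power_eq_iff[of n 0] by (simp add: dvd_eq_mod_eq_0)

lemma gen_power_mod: "gen k ^ n = gen k ^ (n mod k)"
  using gen_power_eq_iff[of n "n mod k"] by simp

lemma mult_subgroup_eq: "mult_subgroup k = (\<lambda>i. gen k ^ i) ` {..<k}"
proof
  show "(\<lambda>i. gen k ^ i) ` {..<k} \<subseteq> mult_subgroup k"
  proof
    fix x
    assume "x \<in> (\<lambda>i. gen k ^ i) ` {..<k}"
    then obtain i where x: "x = gen k ^ i"
      by blast
    then have "x ^ k = gen k ^ (i * k)"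
      by (simp add: power_mult)
    also have "\<dots> = 1"
      by (simp add: gen_power_eq_1_iff)
    finally show "x \<in> mult_subgroup k"
      using x gen_nonzero by (simp add: mult_subgroup_def)
  qed
  show "mult_subgroup k \<subseteq> (\<lambda>i. gen k ^ i) ` {..<k}"
  proof
    fix x :: 'a
    assume "x \<in> mult_subgroup k"
    then have "x \<noteq> 0" "x ^ k = 1"
      by (auto simp: mult_subgroup_def)
    then obtain n where n: "x = \<alpha> ^ n"
      using ex_power_eq by blast
    obtain d where d: "ord = k * d"
      using k by blast
    have "\<alpha> ^ (n * k) = 1"
      using \<open>x ^ k = 1\<close> n by (simp add: power_mult)
    then have "k * d dvd k * n"
      by (simp add: power_eq_1_iff d mult.commute)
    then obtain m where "n = d * m"
      using k by (auto simp: nat_mult_dvd_cancel1)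
    moreover have "ord div k = d"
      using d k by simp
    ultimately have "x = gen k ^ m"
      using n by (simp add: gen_def power_mult)
    then have "x = gen k ^ (m mod k)"
      using gen_power_mod by simp
    then show "x \<in> (\<lambda>i. gen k ^ i) ` {..<k}"
      using k by auto
  qed
qed

lemma card_mult_subgroup: "card (mult_subgroup k :: 'a set) = k"
proof -
  have "inj_on (\<lambda>i. gen k ^ i) {..<k}"
    by (rule inj_onI) (simp add: gen_power_eq_iff)
  then show ?thesis
    by (simp add: mult_subgroup_eq card_image)
qed

end

end

section \<open>The two classes of triples\<close>

definition square_triple :: "'a::field option set \<Rightarrow> bool" where
  "square_triple T \<longleftrightarrow>
     (\<exists>P Q R. T = {P, Q, R} \<and> P \<noteq> Q \<and> Q \<noteq> R \<and> R \<noteq> P \<and> qchi0 (triple_det P Q R) = 1)"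

locale field_prim_root_1mod4 = field_prim_root +
  assumes card_mod_4: "card (UNIV :: 'a set) mod 4 = 1"
begin

lemma four_dvd_ord: "4 dvd ord"
  using dvd_diff_1_of_mod_eq_1[OF card_mod_4] by (simp add: ord_def)

lemma even_ord: "even ord"
  using four_dvd_ord by (metis dvd_trans even_numeral)

lemma square_power_iff: "(\<exists>s. \<alpha> ^ n = s\<^sup>2) \<longleftrightarrow> even n"
proof
  assume "\<exists>s. \<alpha> ^ n = s\<^sup>2"
  then obtain s where s: "\<alpha> ^ n = s\<^sup>2" ..
  then obtain m where "s = \<alpha> ^ m"
    using ex_power_eq prim_nonzero by (metis power_not_zero zero_power2)
  with s have "n mod ord = (m * 2) mod ord"
    by (simp add: power_eq_power_iff flip: power_mult)
  then show "even n"
    using even_ord by (metis dvd_mod_iff dvd_triv_right)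
next
  assume "even n"
  then show "\<exists>s. \<alpha> ^ n = s\<^sup>2"
    by (metis evenE mult.commute power_mult)
qed

lemma qchi0_power_prim: "qchi0 (\<alpha> ^ n) = (-1) ^ n"
  using square_power_iff[of n] prim_nonzero by (simp add: qchi0_def qchi_def)

lemma qchi0_mult: "qchi0 (x * y :: 'a) = qchi0 x * qchi0 y"
proof (cases "x = 0 \<or> y = 0")
  case False
  then obtain n m where "x = \<alpha> ^ n" "y = \<alpha> ^ m"
    using ex_power_eq by blast
  then have "qchi0 (x * y) = qchi0 (\<alpha> ^ (n + m))"
    by (simp add: power_add)
  also have "\<dots> = (-1) ^ (n + m)"
    by (rule qchi0_power_prim)
  finally show ?thesis
    using \<open>x = \<alpha> ^ n\<close> \<open>y = \<alpha> ^ m\<close> by (simp add: qchi0_power_prim power_add)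
qed auto

lemma qchi0_power: "qchi0 (x ^ n :: 'a) = qchi0 x ^ n"
  by (induction n) (simp_all add: qchi0_mult)

lemma power_half_ord: "\<alpha> ^ (ord div 2) = -1"
proof -
  have "(\<alpha> ^ (ord div 2))\<^sup>2 = 1"
    using even_ord power_ord by (simp flip: power_mult)
  moreover have "0 < ord div 2" "ord div 2 < ord"
    using ord_pos even_ord by auto
  then have "\<alpha> ^ (ord div 2) \<noteq> 1"
    by (auto simp: power_eq_1_iff dest: dvd_imp_le)
  ultimately show ?thesis
    by (simp add: power2_eq_1_iff)
qed

lemma qchi0_minus_one: "qchi0 (-1 :: 'a) = 1"
proof -
  have "even (ord div 2)"
    using four_dvd_ord by auto
  then show ?thesis
    using qchi0_power_prim[of "ord div 2"] by (simp add: power_half_ord)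
qed

lemma qchi0_uminus: "qchi0 (- x :: 'a) = qchi0 x"
  using qchi0_mult[of "-1" x] by (simp add: qchi0_minus_one)

lemma square_triple_iff:
  fixes P Q R :: "'a option"
  assumes "P \<noteq> Q" "Q \<noteq> R" "R \<noteq> P"
  shows "square_triple {P, Q, R} \<longleftrightarrow> qchi0 (triple_det P Q R) = 1"
proof
  assume "square_triple {P, Q, R}"
  then obtain P' Q' R' where "{P', Q', R'} = {P, Q, R}" "P' \<noteq> Q'" "Q' \<noteq> R'" "R' \<noteq> P'"
    and "qchi0 (triple_det P' Q' R') = 1"
    unfolding square_triple_def by metis
  then have "triple_det P' Q' R' = triple_det P Q R \<or> triple_det P' Q' R' = - triple_det P Q R"
    using triple_det_perm assms by blast
  then show "qchi0 (triple_det P Q R) = 1"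
    using \<open>qchi0 (triple_det P' Q' R') = 1\<close> by (auto simp: qchi0_uminus)
qed (use assms square_triple_def in blast)

lemma qchi0_triple_det_mobius:
  fixes M :: "'a mat2"
  assumes "mat_det M \<noteq> 0"
  shows "qchi0 (triple_det (mobius M P) (mobius M Q) (mobius M R)) =
    qchi0 (mat_det M) * qchi0 (triple_det P Q R)"
proof -
  obtain m where "m \<noteq> 0"
    and "triple_det (mobius M P) (mobius M Q) (mobius M R) = m\<^sup>2 * mat_det M ^ 3 * triple_det P Q R"
    using triple_det_mobius[OF assms] by blast
  then show ?thesis
    using qchi0_mult_self[OF assms] qchi0_mult_self[OF \<open>m \<noteq> 0\<close>]
    by (simp add: qchi0_mult qchi0_power power2_eq_square power3_eq_cube)
qed

lemma square_triple_mobius_image: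
  fixes M :: "'a mat2"
  assumes "mat_det M \<noteq> 0" "card T = 3"
  shows "card (mobius M ` T) = 3"
    and "square_triple (mobius M ` T) \<longleftrightarrow> (square_triple T \<longleftrightarrow> qchi0 (mat_det M) = 1)"
proof -
  have inj: "inj (mobius M)"
    using bij_mobius[OF assms(1)] by (rule bij_is_inj)
  then show "card (mobius M ` T) = 3"
    using assms(2) by (simp add: card_image inj_on_subset)
  obtain P Q R where T: "T = {P, Q, R}" "P \<noteq> Q" "Q \<noteq> R" "R \<noteq> P"
    using assms(2) card_3_iff by metis
  then have "square_triple (mobius M ` T) \<longleftrightarrow>
      qchi0 (mat_det M) * qchi0 (triple_det P Q R) = 1"
    using inj square_triple_iff[of "mobius M P" "mobius M Q" "mobius M R"]
    by (simp add: inj_eq qchi0_triple_det_mobius[OF assms(1)])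
  moreover have "square_triple T \<longleftrightarrow> qchi0 (triple_det P Q R) = 1"
    using T square_triple_iff by blast
  ultimately show "square_triple (mobius M ` T) \<longleftrightarrow> (square_triple T \<longleftrightarrow> qchi0 (mat_det M) = 1)"
    using qchi0_cases[OF assms(1)] qchi0_cases[of "triple_det P Q R"] T
    by (auto simp: triple_det_eq_0_iff)
qed

lemma square_triple_PSL2_image:
  fixes T :: "'a option set"
  assumes "g \<in> PSL2" "card T = 3"
  shows "card (g ` T) = 3 \<and> (square_triple (g ` T) \<longleftrightarrow> square_triple T)"
proof -
  obtain M s where "g = mobius M" "s \<noteq> 0" "mat_det M = s\<^sup>2"
    using assms(1) by (rule PSL2E)
  then show ?thesis
    using square_triple_mobius_image[of M, OF _ assms(2)] qchi0_square[OF \<open>s \<noteq> 0\<close>] by simp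
qed

lemma square_triple_standard: "square_triple {None, Some 0, Some (1::'a)}"
  using square_triple_iff[of None "Some 0" "Some (1::'a)"] by (simp add: triple_det_def)

lemma PSL2_transitive_on_square_triples:
  fixes T T' :: "'a option set"
  assumes "card T = 3" "card T' = 3" "square_triple T \<longleftrightarrow> square_triple T'"
  shows "\<exists>g \<in> PSL2. g ` T = T'"
proof -
  let ?S = "{None, Some 0, Some (1::'a)}"
  have "\<exists>N. mat_det N \<noteq> 0 \<and> X = mobius N ` ?S" if "card X = 3" for X :: "'a option set"
  proof -
    obtain P Q R where "X = {P, Q, R}" "P \<noteq> Q" "Q \<noteq> R" "R \<noteq> P"
      using \<open>card X = 3\<close> card_3_iff by metis
    then show ?thesis
      using mobius_three_points by fastforce
  qed
  then obtain N N' where N: "mat_det N \<noteq> 0" "T = mobius N ` ?S"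
    and N': "mat_det N' \<noteq> 0" "T' = mobius N' ` ?S"
    using assms(1,2) by metis
  have "card ?S = 3"
    by simp
  then have "square_triple T \<longleftrightarrow> qchi0 (mat_det N) = 1"
    "square_triple T' \<longleftrightarrow> qchi0 (mat_det N') = 1"
    unfolding N(2) N'(2)
    using square_triple_mobius_image(2)[OF N(1)] square_triple_mobius_image(2)[OF N'(1)]
      square_triple_standard by blast+
  then have "qchi0 (mat_det N) = qchi0 (mat_det N')"
    using assms(3) qchi0_cases[OF N(1)] qchi0_cases[OF N'(1)] by auto
  then have "qchi0 (mat_det (mat_mult N' (mat_adj N))) = 1"
    using qchi0_mult_self[OF N(1)] by (simp add: mat_det_mult qchi0_mult)
  then have "mobius (mat_mult N' (mat_adj N)) \<in> PSL2"
    by (metis qchi0_eq_1_iff mobius_in_PSL2 power_not_zero zero_power2)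
  moreover have "mobius (mat_mult N' (mat_adj N)) ` T = T'"
    using N N' by (simp add: image_image mobius_adj_cancel flip: mobius_mult)
  ultimately show ?thesis
    by blast
qed

end

section \<open>Counting blocks through triples\<close>

lemma card_bij_image: "bij g \<Longrightarrow> card (g ` X) = card X"
  by (metis bij_is_inj card_image inj_on_subset subset_UNIV)

lemma card_Collect_bij_image:
  assumes "bij g" "\<And>X. Q (g ` X) \<longleftrightarrow> P X"
  shows "card {Y. Q Y} = card {X. P X}"
proof -
  have "Y \<in> image g ` {X. P X}" if "Q Y" for Y
  proof
    show "Y = g ` (inv g ` Y)"
      using assms(1) by (simp add: bij_is_surj image_f_inv_f)
    with that show "inv g ` Y \<in> {X. P X}"
      by (metis assms(2) mem_Collect_eq)
  qed
  then have "{Y. Q Y} = image g ` {X. P X}"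
    using assms(2) by auto
  moreover have "inj (image g)"
    using assms(1) by (simp add: bij_is_inj inj_on_image)
  ultimately show ?thesis
    by (simp add: card_image inj_on_subset)
qed

definition blocks_through :: "'a::field option set \<Rightarrow> 'a option set \<Rightarrow> nat" where
  "blocks_through B T = card {X \<in> PSL2_orbit B. T \<subseteq> X}"

definition triples_of_class :: "bool \<Rightarrow> 'a::field option set \<Rightarrow> 'a option set set" where
  "triples_of_class b X = {T. T \<subseteq> X \<and> card T = 3 \<and> square_triple T = b}"

lemma blocks_through_PSL2_image:
  assumes "g \<in> PSL2"
  shows "blocks_through B (g ` T) = blocks_through B T"
  unfolding blocks_through_def
proof (rule card_Collect_bij_image[OF bij_PSL2[OF assms]])
  show "g ` X \<in> PSL2_orbit B \<and> g ` T \<subseteq> g ` X \<longleftrightarrow> X \<in> PSL2_orbit B \<and> T \<subseteq> X" for X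
    using assms by (simp add: image_in_PSL2_orbit_iff inj_image_subset_iff bij_is_inj bij_PSL2)
qed

lemma blocks_through_pos:
  fixes B :: "'a::{finite,field} option set"
  assumes "T \<subseteq> B"
  shows "0 < blocks_through B T"
  using assms self_in_PSL2_orbit[of B] unfolding blocks_through_def
  by (auto simp: card_gt_0_iff)

lemma sum_blocks_through_eq:
  fixes B :: "'a::{finite,field} option set"
  shows "(\<Sum>T \<in> {T. card T = 3 \<and> square_triple T = b}. blocks_through B T) =
    (\<Sum>X \<in> PSL2_orbit B. card (triples_of_class b X))"
proof -
  let ?C = "{T::'a option set. card T = 3 \<and> square_triple T = b}"
  have "(\<Sum>T \<in> ?C. blocks_through B T) = (\<Sum>T \<in> ?C. \<Sum>X \<in> PSL2_orbit B. if T \<subseteq> X then 1 else 0)"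
    unfolding blocks_through_def by (simp add: sum.If_cases Int_def conj_commute)
  also have "\<dots> = (\<Sum>X \<in> PSL2_orbit B. \<Sum>T \<in> ?C. if T \<subseteq> X then 1 else 0)"
    by (rule sum.swap)
  also have "\<dots> = (\<Sum>X \<in> PSL2_orbit B. card (triples_of_class b X))"
    unfolding triples_of_class_def by (simp add: sum.If_cases Int_def conj_ac)
  finally show ?thesis .
qed

lemma card_ordered_triples:
  assumes "card T = 3"
  shows "card {(P, Q, R). {P, Q, R} = T \<and> P \<noteq> Q \<and> Q \<noteq> R \<and> R \<noteq> P} = 6"
proof -
  obtain a b c where T: "T = {a, b, c}" "a \<noteq> b" "b \<noteq> c" "a \<noteq> c"
    using assms card_3_iff by metis
  have "{(P, Q, R). {P, Q, R} = T \<and> P \<noteq> Q \<and> Q \<noteq> R \<and> R \<noteq> P} =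
      {(a, b, c), (a, c, b), (b, a, c), (b, c, a), (c, a, b), (c, b, a)}"
  proof (intro set_eqI iffI)
    fix x
    assume "x \<in> {(P, Q, R). {P, Q, R} = T \<and> P \<noteq> Q \<and> Q \<noteq> R \<and> R \<noteq> P}"
    then obtain P Q R where x: "x = (P, Q, R)" "{P, Q, R} = {a, b, c}" "P \<noteq> Q" "Q \<noteq> R" "R \<noteq> P"
      using T(1) by blast
    then have "P = a \<or> P = b \<or> P = c" "Q = a \<or> Q = b \<or> Q = c" "R = a \<or> R = b \<or> R = c"
      by blast+
    then show "x \<in> {(a, b, c), (a, c, b), (b, a, c), (b, c, a), (c, a, b), (c, b, a)}"
      using x(1,3-5) by (elim disjE) simp_all
  qed (use T in auto)
  then show ?thesis
    using T by (simp add: eq_commute)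
qed

lemma sum_distinct_triples_eq:
  fixes f :: "'a set \<Rightarrow> 'b::comm_semiring_1"
  assumes "finite B"
  shows "(\<Sum>(P, Q, R) \<in> {(P, Q, R) \<in> B \<times> B \<times> B. P \<noteq> Q \<and> Q \<noteq> R \<and> R \<noteq> P}. f {P, Q, R}) =
    6 * (\<Sum>T \<in> {T. T \<subseteq> B \<and> card T = 3}. f T)"
proof -
  let ?set = "\<lambda>(P, Q, R). {P, Q, R} :: 'a set"
  let ?D = "{(P, Q, R) \<in> B \<times> B \<times> B. P \<noteq> Q \<and> Q \<noteq> R \<and> R \<noteq> P}"
  let ?S = "{T. T \<subseteq> B \<and> card T = 3}"
  have "(\<Sum>(P, Q, R) \<in> ?D. f {P, Q, R}) = (\<Sum>x \<in> ?D. f (?set x))"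
    by (rule sum.cong) auto
  also have "\<dots> = (\<Sum>T \<in> ?set ` ?D. \<Sum>x \<in> {x \<in> ?D. ?set x = T}. f (?set x))"
    by (rule sum.image_gen, rule finite_subset[of _ "B \<times> B \<times> B"]) (auto simp: assms)
  also have "?set ` ?D = ?S"
    by (auto simp: card_3_iff image_iff)
  also have "(\<Sum>T \<in> ?S. \<Sum>x \<in> {x \<in> ?D. ?set x = T}. f (?set x)) = (\<Sum>T \<in> ?S. 6 * f T)"
  proof (rule sum.cong[OF refl])
    fix T
    assume "T \<in> ?S"
    then have "{x \<in> ?D. ?set x = T} = {(P, Q, R). {P, Q, R} = T \<and> P \<noteq> Q \<and> Q \<noteq> R \<and> R \<noteq> P}"
      by auto
    then have "card {x \<in> ?D. ?set x = T} = 6"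
      using card_ordered_triples[of T] \<open>T \<in> ?S\<close> by simp
    have "(\<Sum>x \<in> {x \<in> ?D. ?set x = T}. f (?set x)) = (\<Sum>x \<in> {x \<in> ?D. ?set x = T}. f T)"
      by (rule sum.cong) auto
    also have "\<dots> = 6 * f T"
      using \<open>card {x \<in> ?D. ?set x = T} = 6\<close> by simp
    finally show "(\<Sum>x \<in> {x \<in> ?D. ?set x = T}. f (?set x)) = 6 * f T" .
  qed
  finally show ?thesis
    by (simp add: sum_distrib_left)
qed

definition triple_char_sum :: "'a::field option set \<Rightarrow> int" where
  "triple_char_sum B = (\<Sum>P\<in>B. \<Sum>Q\<in>B. \<Sum>R\<in>B. qchi0 (triple_det P Q R))"

context field_prim_root_1mod4
begin

lemma card_triples_of_class_PSL2_image:
  fixes X :: "'a option set"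
  assumes "g \<in> PSL2"
  shows "card (triples_of_class b (g ` X)) = card (triples_of_class b X)"
  unfolding triples_of_class_def
proof (rule card_Collect_bij_image[OF bij_PSL2[OF assms]])
  fix T :: "'a option set"
  have "inj g"
    using bij_PSL2[OF assms] by (rule bij_is_inj)
  then show "g ` T \<subseteq> g ` X \<and> card (g ` T) = 3 \<and> square_triple (g ` T) = b \<longleftrightarrow>
      T \<subseteq> X \<and> card T = 3 \<and> square_triple T = b"
    using square_triple_PSL2_image[OF assms]
    by (auto simp: inj_image_subset_iff card_image inj_on_subset)
qed

lemma card_square_triples_eq: 
  "card {T :: 'a option set. card T = 3 \<and> square_triple T} =
   card {T :: 'a option set. card T = 3 \<and> \<not> square_triple T}"
proof -
  let ?M = "(\<alpha>, 0, 0, 1)"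
  have M: "mat_det ?M \<noteq> 0" "qchi0 (mat_det ?M) = -1"
    using prim_nonzero qchi0_power_prim[of 1] by simp_all
  show ?thesis
    using square_triple_mobius_image(2)[OF M(1)] M(2) card_bij_image[OF bij_mobius[OF M(1)]]
    by (intro card_Collect_bij_image[OF bij_mobius[OF M(1)]]) auto
qed

lemma card_triples_of_class:
  "card {T :: 'a option set. card T = 3 \<and> square_triple T = b} =
   card {T :: 'a option set. card T = 3 \<and> square_triple T}"
  by (cases b) (simp_all add: card_square_triples_eq)

lemma ex_triple_of_class: "\<exists>T :: 'a option set. card T = 3 \<and> square_triple T = b"
proof -
  have "{None, Some 0, Some (1::'a)} \<in> {T. card T = 3 \<and> square_triple T}"
    using square_triple_standard by simp
  then have "{T :: 'a option set. card T = 3 \<and> square_triple T} \<noteq> {}"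
    by blast
  then have "card {T :: 'a option set. card T = 3 \<and> square_triple T = b} \<noteq> 0"
    unfolding card_triples_of_class by simp
  then obtain T where "T \<in> {T :: 'a option set. card T = 3 \<and> square_triple T = b}"
    by (metis card.empty ex_in_conv)
  then show ?thesis
    by blast
qed

text \<open>Double counting the pairs (triple of class \<open>b\<close>, block containing it), using that
  \<open>PSL(2, q)\<close> is transitive on each class of triples and on the blocks.\<close>

lemma blocks_through_double_count:
  fixes B T :: "'a option set"
  assumes "card T = 3"
  shows "card {T' :: 'a option set. card T' = 3 \<and> square_triple T'} * blocks_through B T =
    card (PSL2_orbit B) * card (triples_of_class (square_triple T) B)"
proof -
  let ?b = "square_triple T"
  let ?C = "{T' :: 'a option set. card T' = 3 \<and> square_triple T' = ?b}"
  have same_blocks: "blocks_through B T' = blocks_through B T" if T': "T' \<in> ?C" for T'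
  proof -
    obtain g where "g \<in> PSL2" "g ` T = T'"
      using PSL2_transitive_on_square_triples[OF assms, of T'] T' by auto
    then show ?thesis
      using blocks_through_PSL2_image[of g B T] by simp
  qed
  have same_triples: "card (triples_of_class ?b X) = card (triples_of_class ?b B)"
    if X: "X \<in> PSL2_orbit B" for X
  proof -
    obtain g where "g \<in> PSL2" "X = g ` B"
      using X unfolding PSL2_orbit_def by blast
    then show ?thesis
      by (simp add: card_triples_of_class_PSL2_image)
  qed
  have "card {T' :: 'a option set. card T' = 3 \<and> square_triple T'} * blocks_through B T =
      (\<Sum>T' \<in> ?C. blocks_through B T)"
    by (simp add: card_triples_of_class)
  also have "\<dots> = (\<Sum>T' \<in> ?C. blocks_through B T')"
    by (rule sum.cong[OF refl]) (rule same_blocks[symmetric])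
  also have "\<dots> = (\<Sum>X \<in> PSL2_orbit B. card (triples_of_class ?b X))"
    by (rule sum_blocks_through_eq)
  also have "\<dots> = (\<Sum>X \<in> PSL2_orbit B. card (triples_of_class ?b B))"
    by (rule sum.cong[OF refl]) (rule same_triples)
  finally show ?thesis
    by simp
qed

lemma starter3_iff_balanced:
  fixes B :: "'a option set"
  assumes "3 \<le> card B"
  shows "starter3 k B \<longleftrightarrow>
    card B = k \<and> card (triples_of_class True B) = card (triples_of_class False B)"
proof -
  define m where "m = card {T :: 'a option set. card T = 3 \<and> square_triple T}"
  define n where "n = card (PSL2_orbit B)"
  have "0 < n"
    using self_in_PSL2_orbit[of B] by (auto simp: n_def card_gt_0_iff)
  have "0 < m"
    using ex_triple_of_class[of True] by (auto simp: m_def card_gt_0_iff)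
  have count: "m * blocks_through B T = n * card (triples_of_class (square_triple T) B)"
    if "card T = 3" for T
    unfolding m_def n_def by (rule blocks_through_double_count[OF that])
  obtain T0 where T0: "T0 \<subseteq> B" "card T0 = 3"
    using obtain_subset_with_card_n[OF assms] by metis
  show ?thesis
  proof
    assume "starter3 k B"
    then obtain lam where "card B = k" and lam: "\<forall>T. card T = 3 \<longrightarrow> blocks_through B T = lam"
      unfolding starter3_def blocks_through_def by blast
    have "n * card (triples_of_class b B) = m * lam" for b
    proof -
      obtain T :: "'a option set" where "card T = 3" "square_triple T = b"
        using ex_triple_of_class by blast
      then show ?thesis
        using count[of T] lam by simp
    qed
    then have "n * card (triples_of_class True B) = n * card (triples_of_class False B)"
      by simp
    then show "card B = k \<and> card (triples_of_class True B) = card (triples_of_class False B)"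
      using \<open>card B = k\<close> \<open>0 < n\<close> by simp
  next
    assume balanced: "card B = k \<and> card (triples_of_class True B) = card (triples_of_class False B)"
    then have class_eq: "card (triples_of_class b B) = card (triples_of_class True B)" for b
      by (cases b) simp_all
    have "m * blocks_through B T = m * blocks_through B T0" if "card T = 3" for T
      using count[OF that] count[OF T0(2)] class_eq[of "square_triple T"]
        class_eq[of "square_triple T0"] by simp
    then have "\<forall>T. card T = 3 \<longrightarrow> card {X \<in> PSL2_orbit B. T \<subseteq> X} = blocks_through B T0"
      using \<open>0 < m\<close> by (simp add: blocks_through_def)
    then show "starter3 k B"
      using balanced blocks_through_pos[OF T0(1)] unfolding starter3_def by blast
  qed
qed

lemma triple_char_sum_eq:
  fixes B :: "'a option set"
  shows "triple_char_sum B =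
    6 * (int (card (triples_of_class True B)) - int (card (triples_of_class False B)))"
proof -
  let ?f = "\<lambda>(P, Q, R). qchi0 (triple_det P Q R)"
  let ?D = "{(P, Q, R) \<in> B \<times> B \<times> B. P \<noteq> Q \<and> Q \<noteq> R \<and> R \<noteq> P}"
  let ?sgn = "\<lambda>T. if square_triple T then 1 else (-1 :: int)"
  have "triple_char_sum B = (\<Sum>x \<in> B \<times> B \<times> B. ?f x)"
    by (simp add: triple_char_sum_def sum.cartesian_product)
  also have "\<dots> = (\<Sum>x \<in> ?D. ?f x)"
    by (rule sum.mono_neutral_right) (auto simp: qchi0_def triple_det_eq_0_iff)
  also have "\<dots> = (\<Sum>(P, Q, R) \<in> ?D. ?sgn {P, Q, R})"
  proof (rule sum.cong[OF refl])
    fix x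
    assume "x \<in> ?D"
    then obtain P Q R where "x = (P, Q, R)" "P \<noteq> Q" "Q \<noteq> R" "R \<noteq> P"
      by auto
    then show "?f x = (\<lambda>(P, Q, R). ?sgn {P, Q, R}) x"
      using qchi0_cases[of "triple_det P Q R"] by (auto simp: square_triple_iff triple_det_eq_0_iff)
  qed
  also have "\<dots> = 6 * (\<Sum>T \<in> {T. T \<subseteq> B \<and> card T = 3}. ?sgn T)"
    by (rule sum_distinct_triples_eq) simp
  also have "(\<Sum>T \<in> {T. T \<subseteq> B \<and> card T = 3}. ?sgn T) =
      int (card (triples_of_class True B)) - int (card (triples_of_class False B))"
    by (simp add: sum.If_cases triples_of_class_def Int_def conj_ac)
  finally show ?thesis .
qed

end

section \<open>Character sums over a cyclic subgroup\<close>

definition triple_corr :: "nat \<Rightarrow> (int \<Rightarrow> int) \<Rightarrow> int" where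
  "triple_corr k E = (\<Sum>j<k. \<Sum>l<k. E (int j) * E (int l - int j) * E (- int l))"

lemma sum_shift_periodic:
  fixes h :: "int \<Rightarrow> 'b::comm_monoid_add"
  assumes "0 < k" and periodic: "\<And>x. h x = h (x mod int k)"
  shows "(\<Sum>j<k. h (int j - c)) = (\<Sum>j<k. h (int j))"
proof -
  define s where "s j = nat ((int j - c) mod int k)" for j
  have s: "int (s j) = (int j - c) mod int k" for j
    using \<open>0 < k\<close> by (simp add: s_def)
  have "inj_on s {..<k}"
  proof
    fix j j'
    assume "j \<in> {..<k}" "j' \<in> {..<k}" "s j = s j'"
    then have "(int j - c + c) mod int k = (int j' - c + c) mod int k"
      using s by (metis mod_add_left_eq)
    with \<open>j \<in> {..<k}\<close> \<open>j' \<in> {..<k}\<close> show "j = j'"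
      by simp
  qed
  moreover have "s j < k" for j
    using s[of j] \<open>0 < k\<close> pos_mod_bound[of "int k" "int j - c"] by linarith
  then have "s ` {..<k} \<subseteq> {..<k}"
    by auto
  ultimately have "s ` {..<k} = {..<k}"
    by (simp add: endo_inj_surj)
  then have "(\<Sum>j<k. h (int j)) = (\<Sum>j<k. h (int (s j)))"
    using sum.reindex[OF \<open>inj_on s {..<k}\<close>, of "\<lambda>m. h (int m)"] by simp
  also have "\<dots> = (\<Sum>j<k. h (int j - c))"
    by (simp add: s periodic[symmetric])
  finally show ?thesis ..
qed

text \<open>Substituting \<open>j - i\<close> and \<open>l - i\<close> for \<open>j\<close> and \<open>l\<close>, a translation in \<open>\<int>/k\<close>, makes the inner double
  sum independent of \<open>i\<close>.\<close>

lemma triple_sum_periodic_eq: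
  fixes F :: "int \<Rightarrow> int"
  assumes "0 < k" and periodic: "\<And>x. F x = F (x mod int k)"
  shows "(\<Sum>i<k. \<Sum>j<k. \<Sum>l<k. F (int j - int i) * F (int l - int j) * F (int i - int l)) =
    int k * triple_corr k F"
proof -
  define G where "G a b = F a * F (b - a) * F (- b)" for a b
  have periodic_mod: "F (x mod int k + y) = F (x + y)" "F (y - x mod int k) = F (y - x)" for x y
    by (metis periodic mod_add_left_eq, metis periodic mod_diff_right_eq)
  have periodic_neg: "F (- x) = F (- (x mod int k))" for x
    by (metis periodic mod_minus_eq)
  have "G a x = G a (x mod int k)" for a x
    using periodic_mod(1)[of x "- a"] periodic_neg[of x] by (simp add: G_def)
  then have G_shift: "(\<Sum>l<k. G a (int l - c)) = (\<Sum>l<k. G a (int l))" for a c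
    by (rule sum_shift_periodic[OF \<open>0 < k\<close>])
  have "(\<Sum>l<k. G x (int l)) = (\<Sum>l<k. G (x mod int k) (int l))" for x
    using periodic[of x] periodic_mod(2) by (simp add: G_def)
  then have G_sum_shift: "(\<Sum>j<k. \<Sum>l<k. G (int j - c) (int l)) = (\<Sum>j<k. \<Sum>l<k. G (int j) (int l))" for c
    by (rule sum_shift_periodic[OF \<open>0 < k\<close>])
  have "(\<Sum>j<k. \<Sum>l<k. F (int j - int i) * F (int l - int j) * F (int i - int l)) =
      triple_corr k F" for i
  proof -
    have "(\<Sum>j<k. \<Sum>l<k. F (int j - int i) * F (int l - int j) * F (int i - int l)) =
        (\<Sum>j<k. \<Sum>l<k. G (int j - int i) (int l - int i))"
      by (simp add: G_def algebra_simps)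
    also have "\<dots> = (\<Sum>j<k. \<Sum>l<k. G (int j - int i) (int l))"
      by (simp only: G_shift)
    also have "\<dots> = triple_corr k F"
      by (simp only: G_sum_shift) (simp add: G_def triple_corr_def)
    finally show ?thesis .
  qed
  then show ?thesis
    by simp
qed

lemma nat_mod_bounds:
  fixes x :: int
  assumes "0 < k" "x mod int k \<noteq> 0"
  shows "0 < nat (x mod int k)" "nat (x mod int k) < k"
proof -
  have "0 \<le> x mod int k" "x mod int k < int k"
    using assms(1) by simp_all
  moreover from this(1) assms(2) have "0 < x mod int k"
    by linarith
  ultimately show "0 < nat (x mod int k)" "nat (x mod int k) < k"
    by (simp_all add: nat_less_iff)
qed

context field_prim_root
begin

text \<open>\<open>chi_one_minus k r\<close> is \<open>\<chi>(1 - \<gamma>\<^sup>r)\<close> for \<open>\<gamma> = gen k\<close>; the integer exponent is reduced mod \<open>k\<close>, so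
  that differences of exponents can be used directly.\<close>

definition chi_one_minus :: "nat \<Rightarrow> int \<Rightarrow> int" where
  "chi_one_minus k r = qchi0 (1 - gen k ^ nat (r mod int k))"

lemma chi_one_minus_periodic: "chi_one_minus k r = chi_one_minus k (r mod int k)"
  by (simp add: chi_one_minus_def)

lemma chi_one_minus_0 [simp]: "chi_one_minus k 0 = 0"
  by (simp add: chi_one_minus_def)

context
  fixes k :: nat
  assumes k: "0 < k" "k dvd ord"
begin

lemma chi_one_minus_eq_mod:
  assumes "int m mod int k = x mod int k"
  shows "chi_one_minus k x = qchi0 (1 - gen k ^ m)"
proof -
  have "x mod int k = int (m mod k)"
    using assms by (simp add: of_nat_mod)
  then have "nat (x mod int k) = m mod k"
    by simp
  then show ?thesis
    using gen_power_mod[OF k, of m] by (simp add: chi_one_minus_def)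
qed

lemma one_minus_gen_power_nonzero:
  assumes "0 < m" "m < k"
  shows "1 - gen k ^ m \<noteq> 0"
proof -
  have "\<not> k dvd m"
    using assms by (simp add: nat_dvd_not_less)
  then show ?thesis
    using gen_power_eq_1_iff[OF k, of m] by simp
qed

lemma chi_one_minus_cases:
  assumes "x mod int k \<noteq> 0"
  shows "chi_one_minus k x = 1 \<or> chi_one_minus k x = -1"
proof -
  have "1 - gen k ^ nat (x mod int k) \<noteq> 0"
    using nat_mod_bounds[OF k(1) assms] by (rule one_minus_gen_power_nonzero)
  then show ?thesis
    by (simp add: chi_one_minus_def qchi0_cases)
qed

lemma qchi_one_minus_gen_power:
  assumes "0 < m" "m < k"
  shows "qchi (1 - gen k ^ m) = chi_one_minus k (int m)"
  using one_minus_gen_power_nonzero[OF assms] assms by (simp add: chi_one_minus_def qchi0_def)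

end

end

context field_prim_root_1mod4
begin

context
  fixes k :: nat
  assumes k: "0 < k" "k dvd ord" and even_index: "even (ord div k)"
begin

lemma qchi0_gen: "qchi0 (gen k) = 1"
  using qchi0_power_prim even_index by (simp add: gen_def)

lemma qchi0_gen_power_diff: "qchi0 (gen k ^ i - gen k ^ j) = chi_one_minus k (int j - int i)"
proof -
  define r where "r = nat ((int j - int i) mod int k)"
  have "int (i + r) mod int k = int j mod int k"
    using k by (simp add: r_def mod_add_right_eq)
  then have "gen k ^ (i + r) = gen k ^ j"
    using gen_power_eq_iff[OF k] by (metis of_nat_eq_iff of_nat_mod)
  then have "gen k ^ i - gen k ^ j = gen k ^ i * (1 - gen k ^ r)"
    by (simp add: power_add algebra_simps)
  then show ?thesis
    by (simp add: chi_one_minus_def r_def qchi0_mult qchi0_power qchi0_gen)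
qed

lemma chi_one_minus_uminus: "chi_one_minus k (- x) = chi_one_minus k x"
proof (cases "x mod int k = 0")
  case True
  then show ?thesis
    by (simp add: chi_one_minus_def zmod_zminus1_eq_if)
next
  case False
  define m where "m = nat (x mod int k)"
  have m: "int m = x mod int k" "0 < m" "m < k"
    using nat_mod_bounds[OF k(1) False] by (simp_all add: m_def)
  then have "chi_one_minus k (- x) = qchi0 (1 - gen k ^ (k - m))"
    using k False by (intro chi_one_minus_eq_mod) (simp_all add: zmod_zminus1_eq_if of_nat_diff)
  also have "1 - gen k ^ (k - m) = - (gen k ^ (k - m)) * (1 - gen k ^ m)"
    using gen_power_eq_1_iff[OF k, of k] m by (simp add: algebra_simps flip: power_add)
  also have "qchi0 \<dots> = qchi0 (1 - gen k ^ m)"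
    using qchi0_gen by (simp add: qchi0_mult qchi0_uminus qchi0_power)
  also have "\<dots> = chi_one_minus k x"
    by (simp add: chi_one_minus_def m(1)[symmetric])
  finally show ?thesis .
qed

lemma triple_char_sum_mult_subgroup:
  "triple_char_sum (Some ` (mult_subgroup k :: 'a set)) = int k * triple_corr k (chi_one_minus k)"
proof -
  let ?g = "\<lambda>i. gen k ^ i"
  let ?H = "mult_subgroup k :: 'a set"
  have "triple_char_sum (Some ` ?H) = (\<Sum>x\<in>?H. \<Sum>y\<in>?H. \<Sum>z\<in>?H. qchi0 ((x - y) * (y - z) * (z - x)))"
    by (simp add: triple_char_sum_def sum.reindex triple_det_Some)
  also have "\<dots> = (\<Sum>i<k. \<Sum>j<k. \<Sum>l<k. qchi0 ((?g i - ?g j) * (?g j - ?g l) * (?g l - ?g i)))"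
    using gen_power_eq_iff[OF k] by (simp add: mult_subgroup_eq[OF k] sum.reindex inj_on_def)
  also have "\<dots> = (\<Sum>i<k. \<Sum>j<k. \<Sum>l<k. chi_one_minus k (int j - int i) *
      chi_one_minus k (int l - int j) * chi_one_minus k (int i - int l))"
    by (simp add: qchi0_mult qchi0_gen_power_diff)
  also have "\<dots> = int k * triple_corr k (chi_one_minus k)"
    by (rule triple_sum_periodic_eq[of k "chi_one_minus k", OF \<open>0 < k\<close> chi_one_minus_periodic])
  finally show ?thesis .
qed

lemma gives_3design_iff_triple_corr:
  assumes "3 \<le> k"
  shows "gives_3design TYPE('a) k \<longleftrightarrow> triple_corr k (chi_one_minus k) = 0"
proof -
  let ?B = "Some ` (mult_subgroup k :: 'a set)"
  have "card ?B = k"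
    using card_mult_subgroup[OF k] by (simp add: card_image)
  then have "gives_3design TYPE('a) k \<longleftrightarrow>
      card (triples_of_class True ?B) = card (triples_of_class False ?B)"
    using starter3_iff_balanced[of ?B k] assms by (simp add: gives_3design_def)
  also have "\<dots> \<longleftrightarrow> triple_char_sum ?B = 0"
    by (simp add: triple_char_sum_eq)
  also have "\<dots> \<longleftrightarrow> triple_corr k (chi_one_minus k) = 0"
    using k by (simp add: triple_char_sum_mult_subgroup)
  finally show ?thesis .
qed

end

end

section \<open>The subgroups of order 13 and 26\<close>

definition admissible_signs :: "int list set" where
  "admissible_signs =
     {[1, 1, -1, 1, -1, -1], [-1, -1, 1, -1, 1, 1], [1, 1, -1, -1, -1, 1], [-1, -1, 1, 1, 1, -1],
      [1, -1, 1, 1, -1, -1], [-1, 1, -1, -1, 1, 1], [1, -1, 1, -1, -1, 1], [-1, 1, -1, 1, 1, -1]}"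

lemma periodic_even_eq_min:
  fixes e :: "int \<Rightarrow> 'b"
  assumes periodic: "\<And>x. e x = e (x mod k)" and even: "\<And>x. e (- x) = e x"
  shows "e x = e (min (x mod k) (k - x mod k))"
proof -
  have "e (k - x mod k) = e (x mod k)"
    using periodic[of "k - x mod k"] periodic[of "x mod k - k"] even[of "x mod k - k"]
    by (simp add: mod_diff_left_eq)
  then show ?thesis
    using periodic[of x] by (simp add: min_def)
qed

lemma triple_corr_13_eq_0_iff:
  fixes e :: "int \<Rightarrow> int"
  assumes periodic: "\<And>x. e x = e (x mod 13)" and even: "\<And>x. e (- x) = e x"
    and "e 0 = 0" and signs: "\<And>x. x mod 13 \<noteq> 0 \<Longrightarrow> e x = 1 \<or> e x = -1"
  shows "triple_corr 13 e = 0 \<longleftrightarrow> map (\<lambda>i. e (int i)) [1..<7] \<in> admissible_signs"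
proof -
  \<comment> \<open>An opaque copy of \<open>e\<close>, so that \<open>e\<close> can be rewritten into its six values without looping.\<close>
  define c where "c = e"
  have e: "e x = c (min (x mod 13) (13 - x mod 13))" for x
    unfolding c_def by (rule periodic_even_eq_min[OF periodic even])
  have "c 0 = 0" "c 1 = 1 \<or> c 1 = -1" "c 2 = 1 \<or> c 2 = -1" "c 3 = 1 \<or> c 3 = -1"
    "c 4 = 1 \<or> c 4 = -1" "c 5 = 1 \<or> c 5 = -1" "c 6 = 1 \<or> c 6 = -1"
    using \<open>e 0 = 0\<close> signs by (simp_all add: c_def)
  then show ?thesis
    unfolding triple_corr_def admissible_signs_def e
    by (simp add: lessThan_nat_numeral upt_conv_Cons) (elim disjE; simp)
qed

lemma periodic_26_eq_cases:
  fixes E e :: "int \<Rightarrow> 'b::times"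
  assumes E_periodic: "\<And>x. E x = E (x mod 26)"
    and E_even: "\<And>n. E (2 * n) = e n"
    and E_odd: "\<And>t. t mod 13 \<noteq> 0 \<Longrightarrow> E (2 * t + 13) = e t * e (2 * t)"
  shows "E x = (let r = x mod 26 in
    if r = 13 then E 13 else if even r then e (r div 2) else e ((r - 13) div 2) * e (r - 13))"
proof -
  define r where "r = x mod 26"
  have "E x = E r"
    unfolding r_def by (rule E_periodic)
  moreover have "0 \<le> r" "r < 26"
    by (simp_all add: r_def)
  moreover have "E r = e (r div 2)" if "even r"
    using E_even[of "r div 2"] that by simp
  moreover have "E r = e ((r - 13) div 2) * e (r - 13)" if "odd r" "r \<noteq> 13"
  proof -
    define t where "t = (r - 13) div 2"
    have "2 * t = r - 13" "t mod 13 \<noteq> 0"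
      using that \<open>0 \<le> r\<close> \<open>r < 26\<close> unfolding t_def by presburger+
    then have "E r = e t * e (2 * t)"
      using E_odd[of t] by simp
    then show ?thesis
      using \<open>2 * t = r - 13\<close> by (simp add: t_def)
  qed
  ultimately show ?thesis
    by (simp add: Let_def r_def)
qed

lemma triple_corr_26_eq_0_iff:
  fixes e E :: "int \<Rightarrow> int"
  assumes periodic: "\<And>x. e x = e (x mod 13)" and even: "\<And>x. e (- x) = e x"
    and "e 0 = 0" and signs: "\<And>x. x mod 13 \<noteq> 0 \<Longrightarrow> e x = 1 \<or> e x = -1"
    and E_periodic: "\<And>x. E x = E (x mod 26)"
    and E_even: "\<And>n. E (2 * n) = e n"
    and E_odd: "\<And>t. t mod 13 \<noteq> 0 \<Longrightarrow> E (2 * t + 13) = e t * e (2 * t)"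
    and E_13: "E 13 = 1 \<or> E 13 = -1"
  shows "triple_corr 26 E = 0 \<longleftrightarrow> map (\<lambda>i. e (int i)) [1..<7] \<in> admissible_signs"
proof -
  define c where "c = e"
  define s where "s = E 13"
  have E: "E x = (let r = x mod 26 in
      if r = 13 then s else if even r then e (r div 2) else e ((r - 13) div 2) * e (r - 13))" for x
    unfolding s_def by (rule periodic_26_eq_cases[OF E_periodic E_even E_odd])
  have e: "e x = c (min (x mod 13) (13 - x mod 13))" for x
    unfolding c_def by (rule periodic_even_eq_min[OF periodic even])
  have "c 0 = 0" "c 1 = 1 \<or> c 1 = -1" "c 2 = 1 \<or> c 2 = -1" "c 3 = 1 \<or> c 3 = -1"
    "c 4 = 1 \<or> c 4 = -1" "c 5 = 1 \<or> c 5 = -1" "c 6 = 1 \<or> c 6 = -1" "s = 1 \<or> s = -1"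
    using \<open>e 0 = 0\<close> signs E_13 by (simp_all add: c_def s_def)
  then show ?thesis
    unfolding triple_corr_def admissible_signs_def E e Let_def
    by (simp add: lessThan_nat_numeral upt_conv_Cons algebra_simps) (elim disjE; simp)
qed

context field_prim_root_1mod4
begin

context
  assumes ord_52: "52 dvd ord"
begin

lemma ord_div_13_26: "ord div 13 = 4 * (ord div 52)" "ord div 26 = 2 * (ord div 52)"
  "ord div 2 = 26 * (ord div 52)"
proof -
  obtain c where "ord = 52 * c"
    using ord_52 ..
  then show "ord div 13 = 4 * (ord div 52)" "ord div 26 = 2 * (ord div 52)"
    "ord div 2 = 26 * (ord div 52)"
    by simp_all
qed

lemma index_13: "0 < (13::nat)" "13 dvd ord" "even (ord div 13)"
  and index_26: "0 < (26::nat)" "26 dvd ord" "even (ord div 26)"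
  using ord_52 ord_div_13_26 by (auto intro: dvd_trans[rotated])

lemma gen_26_square: "gen 26 ^ 2 = gen 13"
  using ord_div_13_26 by (simp add: gen_def flip: power_mult)

lemma gen_26_power_13: "gen 26 ^ 13 = -1"
  using ord_div_13_26 power_half_ord by (simp add: gen_def flip: power_mult)

lemma chi_one_minus_26_even: "chi_one_minus 26 (2 * n) = chi_one_minus 13 n"
proof -
  have "(2 * n) mod 26 = 2 * (n mod 13)"
    using mult_mod_right[of 2 n 13] by simp
  then have "nat ((2 * n) mod 26) = 2 * nat (n mod 13)"
    by (simp add: nat_mult_distrib)
  then show ?thesis
    by (simp add: chi_one_minus_def power_mult gen_26_square)
qed

lemma chi_one_minus_26_odd:
  assumes "t mod 13 \<noteq> 0"
  shows "chi_one_minus 26 (2 * t + 13) = chi_one_minus 13 t * chi_one_minus 13 (2 * t)"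
proof -
  define m where "m = nat (t mod 13)"
  have m: "int m = t mod 13" "0 < m" "m < 13"
    using nat_mod_bounds[of 13 t] assms by (simp_all add: m_def)
  have "2 * (t mod 13) = (2 * t) mod 26"
    using mult_mod_right[of 2 t 13] by simp
  then have "int (2 * m + 13) mod int 26 = (2 * t + 13) mod int 26"
    using m(1) by (simp add: mod_add_left_eq)
  moreover have "int m mod int 13 = t mod int 13" "int (2 * m) mod int 13 = (2 * t) mod int 13"
    using m(1) by (simp_all add: mod_mult_right_eq)
  ultimately have "chi_one_minus 26 (2 * t + 13) = qchi0 (1 - gen 26 ^ (2 * m + 13))"
    "chi_one_minus 13 t = qchi0 (1 - gen 13 ^ m)"
    "chi_one_minus 13 (2 * t) = qchi0 (1 - gen 13 ^ (2 * m))"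
    using chi_one_minus_eq_mod[OF index_26(1,2)] chi_one_minus_eq_mod[OF index_13(1,2)] by blast+
  moreover have "gen 26 ^ (2 * m + 13) = - (gen 13 ^ m)"
    by (simp add: power_add power_mult gen_26_square gen_26_power_13)
  moreover have "1 - gen 13 ^ (2 * m) = (1 - gen 13 ^ m) * (1 + gen 13 ^ m)"
    by (simp add: power_mult algebra_simps power2_eq_square)
  moreover have "qchi0 (1 - gen 13 ^ m) * qchi0 (1 - gen 13 ^ m) = 1"
    using one_minus_gen_power_nonzero[OF index_13(1,2) m(2,3)] by (rule qchi0_mult_self)
  ultimately show ?thesis
    by (simp add: qchi0_mult mult.assoc[symmetric])
qed

lemma gives_3design_13_iff:
  "gives_3design TYPE('a) 13 \<longleftrightarrow> map (\<lambda>i. chi_one_minus 13 (int i)) [1..<7] \<in> admissible_signs"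
  using gives_3design_iff_triple_corr[OF index_13]
    triple_corr_13_eq_0_iff[OF chi_one_minus_periodic[of 13, simplified]
      chi_one_minus_uminus[OF index_13] chi_one_minus_0
      chi_one_minus_cases[OF index_13(1,2), simplified]]
  by simp

lemma gives_3design_26_iff:
  "gives_3design TYPE('a) 26 \<longleftrightarrow> map (\<lambda>i. chi_one_minus 13 (int i)) [1..<7] \<in> admissible_signs"
  using gives_3design_iff_triple_corr[OF index_26]
    triple_corr_26_eq_0_iff[OF chi_one_minus_periodic[of 13, simplified]
      chi_one_minus_uminus[OF index_13] chi_one_minus_0
      chi_one_minus_cases[OF index_13(1,2), simplified]
      chi_one_minus_periodic[of 26, simplified] chi_one_minus_26_even chi_one_minus_26_odd
      chi_one_minus_cases[OF index_26(1,2), of 13, simplified]]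
  by simp

end

end

theorem theorem5p1:
  fixes \<alpha> :: "'a::{finite,field}"
  assumes "card (UNIV :: 'a set) mod 52 = 1"
    and "primitive_root \<alpha>"
  defines "\<beta> \<equiv> \<alpha> ^ ((card (UNIV :: 'a set) - 1) div 13)"
  shows "(gives_3design TYPE('a) 13 \<longleftrightarrow> gives_3design TYPE('a) 26)
       \<and> (gives_3design TYPE('a) 26 \<longleftrightarrow>
           map (\<lambda>i. qchi (1 - \<beta> ^ i)) [1..<7] \<in>
             {[1,1,-1,1,-1,-1], [-1,-1,1,-1,1,1],
              [1,1,-1,-1,-1,1], [-1,-1,1,1,1,-1],
              [1,-1,1,1,-1,-1], [-1,1,-1,-1,1,1],
              [1,-1,1,-1,-1,1], [-1,1,-1,1,1,-1]})"
proof -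
  let ?q = "card (UNIV :: 'a set)"
  have "52 dvd ?q - 1"
    using assms(1) by (rule dvd_diff_1_of_mod_eq_1)
  interpret field_prim_root_1mod4 \<alpha> "?q - 1"
  proof
    show "?q mod 4 = 1"
      using assms(1) mod_mod_cancel[of 4 52 ?q] by simp
  qed (use assms(2) in simp_all)
  have "\<beta> = gen 13"
    unfolding \<beta>_def gen_def ..
  then have "map (\<lambda>i. qchi (1 - \<beta> ^ i)) [1..<7] = map (\<lambda>i. chi_one_minus 13 (int i)) [1..<7]"
    using qchi_one_minus_gen_power[OF index_13(1,2)[OF \<open>52 dvd ?q - 1\<close>]]
    by (intro map_cong) auto
  then show ?thesis
    unfolding admissible_signs_def[symmetric]
    using gives_3design_13_iff gives_3design_26_iff \<open>52 dvd ?q - 1\<close>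
    by (simp only: simp_thms)
qed

end
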